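(* Let $M=\begin{pmatrix}A&B\\ C&D\end{pmatrix}$ be an operator matrix on $X\oplus Y$, where $A\in\mathcal{L}(X)$ and $D\in\mathcal{L}(Y)$ have g-Drazin inverses, $B\in\mathcal{L}(Y,X)$, $C\in\mathcal{L}(X,Y)$. If $ABC=0$, $ABD=0$, $DCB=0$, $BCBC=0$ and $BCBD=0$, then $M$ has a g-Drazin inverse in $\mathcal{L}(X\oplus Y)$.
   Context: $X,Y$ are complex Banach spaces; $\mathcal{L}(X)$ denotes the Banach algebra of bounded linear operators on $X$, and $\mathcal{L}(Y,X)$ the bounded operators from $Y$ to $X$. An element $a$ of a unital Banach algebra $\mathcal{A}$ is quasinilpotent if $\lim_{n\to\infty}\|a^n\|^{1/n}=0$. An element $a\in\mathcal{A}$ has a g-Drazin (generalized Drazin) inverse if there exists $x\in\mathcal{A}$ with $x=xax$, $ax=xa$, and $a-a^2x$ quasinilpotent; such $x$ is unique and is denoted $a^d$. *)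

theory Defs
  imports "HOL-Analysis.Analysis"
begin

class complex_normed_vector = real_normed_vector +
  fixes scaleC :: "complex \<Rightarrow> 'a \<Rightarrow> 'a" (infixr \<open>*\<^sub>C\<close> 75)
  assumes scaleC_add_right: "a *\<^sub>C (x + y) = a *\<^sub>C x + a *\<^sub>C y"
    and scaleC_add_left: "(a + b) *\<^sub>C x = a *\<^sub>C x + b *\<^sub>C x"
    and scaleC_scaleC: "a *\<^sub>C (b *\<^sub>C x) = (a * b) *\<^sub>C x"
    and scaleC_one: "1 *\<^sub>C x = x"
    and scaleR_scaleC: "scaleR r x = complex_of_real r *\<^sub>C x"
    and norm_scaleC: "norm (a *\<^sub>C x) = cmod a * norm x"

instantiation prod :: (complex_normed_vector, complex_normed_vector) complex_normed_vector
begin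
definition scaleC_prod_def: "a *\<^sub>C z = (a *\<^sub>C fst z, a *\<^sub>C snd z)"
instance
proof
  fix a b :: complex and x y :: "'a \<times> 'b" and r :: real
  show "a *\<^sub>C (x + y) = a *\<^sub>C x + a *\<^sub>C y"
    by (simp add: scaleC_prod_def scaleC_add_right)
  show "(a + b) *\<^sub>C x = a *\<^sub>C x + b *\<^sub>C x"
    by (simp add: scaleC_prod_def scaleC_add_left)
  show "a *\<^sub>C (b *\<^sub>C x) = (a * b) *\<^sub>C x"
    by (simp add: scaleC_prod_def scaleC_scaleC)
  show "1 *\<^sub>C x = x"
    by (simp add: scaleC_prod_def scaleC_one)
  show "scaleR r x = complex_of_real r *\<^sub>C x"
    by (simp add: scaleC_prod_def scaleR_scaleC prod_eq_iff)
  show "norm (a *\<^sub>C x) = cmod a * norm x"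
  proof -
    have "norm (a *\<^sub>C x) = sqrt ((cmod a)\<^sup>2 * ((norm (fst x))\<^sup>2 + (norm (snd x))\<^sup>2))"
      by (simp add: scaleC_prod_def norm_prod_def norm_scaleC power_mult_distrib algebra_simps)
    also have "\<dots> = cmod a * norm x"
      by (simp add: real_sqrt_mult norm_prod_def)
    finally show ?thesis .
  qed
qed
end

definition clin_op :: "('a::complex_normed_vector \<Rightarrow> 'b::complex_normed_vector) \<Rightarrow> bool" where
  "clin_op f \<longleftrightarrow> bounded_linear f \<and> (\<forall>c x. f (c *\<^sub>C x) = c *\<^sub>C f x)"

definition quasinilpotent_op :: "('a::complex_normed_vector \<Rightarrow> 'a) \<Rightarrow> bool" where
  "quasinilpotent_op T \<longleftrightarrow> (\<lambda>n. root n (onorm (T ^^ n))) \<longlonglongrightarrow> 0"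

definition has_gDrazin :: "('a::complex_normed_vector \<Rightarrow> 'a) \<Rightarrow> bool" where
  "has_gDrazin T \<longleftrightarrow> (\<exists>S. clin_op S \<and> S \<circ> T \<circ> S = S \<and> T \<circ> S = S \<circ> T \<and>
      quasinilpotent_op (\<lambda>x. T x - T (T (S x))))"

definition op_matrix :: "('a \<Rightarrow> 'a) \<Rightarrow> ('b \<Rightarrow> 'a) \<Rightarrow> ('a \<Rightarrow> 'b) \<Rightarrow> ('b \<Rightarrow> 'b)
    \<Rightarrow> ('a::complex_normed_vector \<times> 'b::complex_normed_vector \<Rightarrow> 'a \<times> 'b)" where
  "op_matrix A B C D = (\<lambda>(x, y). (A x + B y, C x + D y))"

end

theory Submission
  imports Defs
begin

text \<open>Squaring \<open>M\<close> gives \<open>M\<^sup>2 = P + Q + R\<close> with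
  \<open>P = [[A\<^sup>2, AB], [0, 0]]\<close>, \<open>Q = [[0, 0], [CA + DC, D\<^sup>2 + CB]]\<close> and
  \<open>R = [[BC, BD], [0, 0]]\<close>, and the hypotheses say exactly that \<open>P (Q + R) = 0\<close>, \<open>Q R = 0\<close> and
  \<open>R\<^sup>2 = 0\<close>. By Cline's formula \<open>(UV)\<^sup>d = U ((VU)\<^sup>d)\<^sup>2 V\<close>, \<open>P\<close> and \<open>Q\<close> are g-Drazin invertible
  because \<open>A\<^sup>2\<close> and \<open>D\<^sup>2 + CB\<close> are; the latter is a sum of \<open>D\<^sup>2\<close> and the nilpotent \<open>CB\<close> with
  \<open>D\<^sup>2 CB = 0\<close>. A sum \<open>a + b\<close> of g-Drazin invertible operators with \<open>a b = 0\<close> is g-Drazin invertible,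
  since by Cline's formula again it suffices to invert \<open>[[a, 0], [1, b]]\<close>, and a lower triangular
  operator matrix with g-Drazin invertible diagonal has an explicit g-Drazin inverse given by a
  series. Finally \<open>M\<close> is g-Drazin invertible because \<open>M\<^sup>2\<close> is.\<close>

lemma scaleC_zero_right [simp]: "c *\<^sub>C (0::'a::complex_normed_vector) = 0"
  by (metis add_cancel_right_right scaleC_add_right)

lemma scaleC_diff_right: "c *\<^sub>C ((x::'a::complex_normed_vector) - y) = c *\<^sub>C x - c *\<^sub>C y"
  by (metis add_diff_cancel diff_add_cancel scaleC_add_right)

lemma bounded_linear_scaleC: "bounded_linear (\<lambda>x::'a::complex_normed_vector. c *\<^sub>C x)"
proof
  fix x y :: 'a and r :: real
  show "c *\<^sub>C (x + y) = c *\<^sub>C x + c *\<^sub>C y" by (rule scaleC_add_right)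
  show "c *\<^sub>C (r *\<^sub>R x) = r *\<^sub>R (c *\<^sub>C x)"
    by (simp add: scaleR_scaleC scaleC_scaleC mult.commute)
  show "\<exists>K. \<forall>x. norm (c *\<^sub>C x) \<le> norm x * K"
    by (rule exI[of _ "cmod c"]) (simp add: norm_scaleC mult.commute)
qed

lemma clin_op_bounded_linear: "clin_op f \<Longrightarrow> bounded_linear f"
  by (simp add: clin_op_def)

lemma clin_op_scaleC: "clin_op f \<Longrightarrow> f (c *\<^sub>C x) = c *\<^sub>C f x"
  by (simp add: clin_op_def)

lemma clin_op_compose: "clin_op f \<Longrightarrow> clin_op g \<Longrightarrow> clin_op (\<lambda>x. f (g x))"
  unfolding clin_op_def by (auto intro: bounded_linear_compose)

lemma clin_op_comp: "clin_op f \<Longrightarrow> clin_op g \<Longrightarrow> clin_op (f \<circ> g)"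
  using clin_op_compose[of f g] by (simp add: comp_def)

lemma clin_op_add: "clin_op f \<Longrightarrow> clin_op g \<Longrightarrow> clin_op (\<lambda>x. f x + g x)"
  unfolding clin_op_def by (auto intro: bounded_linear_add simp: scaleC_add_right)

lemma clin_op_diff: "clin_op f \<Longrightarrow> clin_op g \<Longrightarrow> clin_op (\<lambda>x. f x - g x)"
  unfolding clin_op_def by (auto intro: bounded_linear_sub simp: scaleC_diff_right)

lemma clin_op_zero: "clin_op (\<lambda>x. 0)"
  unfolding clin_op_def by simp

lemma clin_op_ident: "clin_op (\<lambda>x. x)"
  unfolding clin_op_def by (simp add: bounded_linear_ident)

lemma clin_op_fst: "clin_op fst"
  unfolding clin_op_def by (simp add: bounded_linear_fst scaleC_prod_def)

lemma clin_op_snd: "clin_op snd"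
  unfolding clin_op_def by (simp add: bounded_linear_snd scaleC_prod_def)

lemma clin_op_Pair: "clin_op f \<Longrightarrow> clin_op g \<Longrightarrow> clin_op (\<lambda>x. (f x, g x))"
  unfolding clin_op_def by (auto intro: bounded_linear_Pair simp: scaleC_prod_def)

lemma clin_op_funpow: "clin_op (f::'a::complex_normed_vector \<Rightarrow> 'a) \<Longrightarrow> clin_op (f ^^ n)"
proof (induction n)
  case (Suc n)
  then show ?case using clin_op_compose[of f "f ^^ n"] by (simp add: comp_def)
qed (simp add: id_def clin_op_ident)

lemma op_matrix_apply: "op_matrix A B C D z = (A (fst z) + B (snd z), C (fst z) + D (snd z))"
  by (simp add: op_matrix_def case_prod_beta)

lemma clin_op_op_matrix:
  assumes "clin_op A" "clin_op B" "clin_op C" "clin_op D"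
  shows "clin_op (op_matrix A B C D)"
  unfolding op_matrix_apply[abs_def]
  by (intro clin_op_Pair clin_op_add clin_op_compose[OF assms(1) clin_op_fst]
      clin_op_compose[OF assms(2) clin_op_snd] clin_op_compose[OF assms(3) clin_op_fst]
      clin_op_compose[OF assms(4) clin_op_snd])

lemma bounded_linear_funpow:
  "bounded_linear (f::'a::real_normed_vector \<Rightarrow> 'a) \<Longrightarrow> bounded_linear (f ^^ n)"
proof (induction n)
  case (Suc n)
  then show ?case using bounded_linear_compose[of f "f ^^ n"] by (simp add: comp_def)
qed (simp add: id_def bounded_linear_ident)

lemma onorm_funpow_le:
  assumes "bounded_linear (f::'a::real_normed_vector \<Rightarrow> 'a)"
  shows "onorm (f ^^ n) \<le> onorm f ^ n"
proof (induction n)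
  case 0 then show ?case using onorm_id_le by (simp add: id_def)
next
  case (Suc n)
  have "onorm (f ^^ Suc n) \<le> onorm f * onorm (f ^^ n)"
    unfolding funpow.simps(2) by (rule onorm_compose[OF assms bounded_linear_funpow[OF assms]])
  also have "\<dots> \<le> onorm f * onorm f ^ n"
    using Suc onorm_pos_le[OF assms] by (simp add: mult_left_mono)
  finally show ?case by (simp only: power_Suc)
qed

lemma norm_le_onorm_mult:
  "bounded_linear f \<Longrightarrow> norm y \<le> B \<Longrightarrow> norm (f y) \<le> onorm f * B"
  by (rule order_trans[OF onorm]) (auto intro: mult_left_mono onorm_pos_le)

lemma norm_funpow_le:
  fixes f :: "'a::real_normed_vector \<Rightarrow> 'a"
  assumes f: "bounded_linear f" and y: "norm y \<le> B"
  shows "norm ((f ^^ n) y) \<le> onorm f ^ n * B"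
proof -
  have "norm ((f ^^ n) y) \<le> onorm (f ^^ n) * B"
    by (rule norm_le_onorm_mult[OF bounded_linear_funpow[OF f] y])
  also have "\<dots> \<le> onorm f ^ n * B"
    using y norm_ge_zero order_trans by (blast intro: mult_right_mono onorm_funpow_le[OF f])
  finally show ?thesis .
qed

lemma
  fixes F :: "nat \<Rightarrow> 'a::complex_normed_vector \<Rightarrow> 'b::{complex_normed_vector,banach}"
  assumes F: "\<And>n. clin_op (F n)" and bound: "\<And>n z. norm (F n z) \<le> G n * norm z"
    and G: "summable G"
  shows summable_clin_op_series: "summable (\<lambda>n. F n z)"
    and clin_op_suminf: "clin_op (\<lambda>z. \<Sum>n. F n z)"
proof -
  show summable: "summable (\<lambda>n. F n z)" for z
    by (rule summable_comparison_test'[OF summable_mult2[OF G, of "norm z"] bound])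
  have blF: "bounded_linear (F n)" for n using F[of n] by (rule clin_op_bounded_linear)
  have "bounded_linear (\<lambda>z. \<Sum>n. F n z)"
  proof (rule bounded_linear_intro[where K = "suminf G"])
    show "(\<Sum>n. F n (x + y)) = (\<Sum>n. F n x) + (\<Sum>n. F n y)" for x y
      using suminf_add[OF summable[of x] summable[of y]] by (simp add: linear_simps[OF blF])
    show "(\<Sum>n. F n (r *\<^sub>R x)) = r *\<^sub>R (\<Sum>n. F n x)" for r x
      using suminf_scaleR_right[OF summable[of x], of r] by (simp add: linear_simps[OF blF])
    show "norm (\<Sum>n. F n x) \<le> norm x * suminf G" for x
      using norm_suminf_le[OF bound summable_mult2[OF G]] suminf_mult2[OF G, of "norm x"]
      by (simp add: mult.commute)
  qed
  moreover have "(\<Sum>n. F n (c *\<^sub>C x)) = c *\<^sub>C (\<Sum>n. F n x)" for c x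
    using bounded_linear.suminf[OF bounded_linear_scaleC summable[of x], of c]
    by (simp add: clin_op_scaleC[OF F])
  ultimately show "clin_op (\<lambda>z. \<Sum>n. F n z)" unfolding clin_op_def by simp
qed

subsection \<open>Quasinilpotent operators\<close>

lemma quasinilpotent_op_geometric_bound:
  fixes T :: "'a::complex_normed_vector \<Rightarrow> 'a"
  assumes T: "bounded_linear T" and q: "quasinilpotent_op T" and e: "\<epsilon> > 0"
  shows "\<exists>K\<ge>0. \<forall>n. onorm (T ^^ n) \<le> K * \<epsilon> ^ n"
proof -
  have nonneg: "0 \<le> onorm (T ^^ n)" for n
    by (rule onorm_pos_le[OF bounded_linear_funpow[OF T]])
  obtain N where N: "\<And>n. n \<ge> N \<Longrightarrow> root n (onorm (T ^^ n)) < \<epsilon>"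
    using LIMSEQ_D[OF q[unfolded quasinilpotent_op_def] e] by (metis abs_less_iff diff_zero real_norm_def)
  define N' where "N' = max N 1"
  define K where "K = 1 + (\<Sum>n<N'. onorm (T ^^ n) / \<epsilon> ^ n)"
  have K1: "1 \<le> K" unfolding K_def using nonneg e by (auto intro!: sum_nonneg)
  have "onorm (T ^^ n) \<le> K * \<epsilon> ^ n" for n
  proof (cases "n < N'")
    case True
    have "onorm (T ^^ n) / \<epsilon> ^ n \<le> (\<Sum>n<N'. onorm (T ^^ n) / \<epsilon> ^ n)"
      by (rule member_le_sum) (use True nonneg e in auto)
    also have "\<dots> \<le> K" unfolding K_def by simp
    finally show ?thesis using e by (simp add: pos_divide_le_eq)
  next
    case False
    then have n: "n \<ge> N" "n > 0" unfolding N'_def by auto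
    have "onorm (T ^^ n) = root n (onorm (T ^^ n)) ^ n" using n nonneg[of n] by simp
    also have "\<dots> \<le> \<epsilon> ^ n"
      using N[OF n(1)] nonneg[of n] by (intro power_mono) (auto intro: real_root_ge_zero)
    also have "\<dots> \<le> K * \<epsilon> ^ n" using K1 e by simp
    finally show ?thesis .
  qed
  then show ?thesis using K1 by (intro exI[of _ K]) auto
qed

lemma quasinilpotent_opI_geometric_bound:
  fixes T :: "'a::complex_normed_vector \<Rightarrow> 'a"
  assumes T: "bounded_linear T" and bound: "\<And>\<epsilon>. \<epsilon> > 0 \<Longrightarrow> \<exists>K. \<forall>n. onorm (T ^^ n) \<le> K * \<epsilon> ^ n"
  shows "quasinilpotent_op T"
  unfolding quasinilpotent_op_def
proof (rule LIMSEQ_I)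
  fix r :: real assume r: "r > 0"
  obtain K where K: "\<And>n. onorm (T ^^ n) \<le> K * (r / 4) ^ n" using bound[of "r / 4"] r by auto
  define K' where "K' = max K 1"
  have "(\<lambda>n. root n K') \<longlonglongrightarrow> 1" by (rule LIMSEQ_root_const) (simp add: K'_def)
  from LIMSEQ_D[OF this, of 1] obtain N where N: "\<And>n. n \<ge> N \<Longrightarrow> root n K' < 2"
    by (auto simp: abs_less_iff)
  have "norm (root n (onorm (T ^^ n)) - 0) < r" if n: "n \<ge> max N 1" for n
  proof -
    have n0: "n > 0" using n by auto
    have "K * (r / 4) ^ n \<le> K' * (r / 4) ^ n" unfolding K'_def using r by (intro mult_right_mono) auto
    then have "onorm (T ^^ n) \<le> K' * (r / 4) ^ n" using K[of n] by linarith
    then have "root n (onorm (T ^^ n)) \<le> root n (K' * (r / 4) ^ n)" using n0 by simp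
    also have "\<dots> = root n K' * (r / 4)"
      using n0 r by (simp add: real_root_mult real_root_power_cancel)
    also have "\<dots> \<le> 2 * (r / 4)" using N[of n] n r by (intro mult_right_mono) auto
    finally show ?thesis
      using r real_root_ge_zero[OF onorm_pos_le[OF bounded_linear_funpow[OF T]], of n n] by simp
  qed
  then show "\<exists>no. \<forall>n\<ge>no. norm (root n (onorm (T ^^ n)) - 0) < r" by blast
qed

lemma quasinilpotent_op_nilpotent:
  fixes T :: "'a::complex_normed_vector \<Rightarrow> 'a"
  assumes T: "bounded_linear T" and nil: "T ^^ k = (\<lambda>_. 0)"
  shows "quasinilpotent_op T"
proof (rule quasinilpotent_opI_geometric_bound[OF T])
  fix \<epsilon> :: real assume e: "\<epsilon> > 0"
  have nonneg: "0 \<le> onorm (T ^^ i)" for i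
    by (rule onorm_pos_le[OF bounded_linear_funpow[OF T]])
  have "onorm (T ^^ n) \<le> (\<Sum>i<k. onorm (T ^^ i) / \<epsilon> ^ i) * \<epsilon> ^ n" for n
  proof (cases "n < k")
    case True
    have "onorm (T ^^ n) / \<epsilon> ^ n \<le> (\<Sum>i<k. onorm (T ^^ i) / \<epsilon> ^ i)"
      by (rule member_le_sum) (use True e nonneg in auto)
    then show ?thesis using e by (simp add: pos_divide_le_eq)
  next
    case False
    have "T ^^ n = T ^^ (n - k) \<circ> T ^^ k" using False by (simp add: funpow_add[symmetric])
    also have "\<dots> = (\<lambda>_. 0)"
      using nil linear_simps(3)[OF bounded_linear_funpow[OF T]] by (auto simp: fun_eq_iff)
    finally show ?thesis using e nonneg by (simp add: onorm_zero sum_nonneg)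
  qed
  then show "\<exists>K. \<forall>n. onorm (T ^^ n) \<le> K * \<epsilon> ^ n" by blast
qed

lemma quasinilpotent_op_factor_powers:
  fixes T :: "'a::complex_normed_vector \<Rightarrow> 'a" and g :: "'b::complex_normed_vector \<Rightarrow> 'b"
  assumes T: "bounded_linear T" and f: "bounded_linear f" and h: "bounded_linear h"
    and g: "bounded_linear g" and qg: "quasinilpotent_op g"
    and powers: "\<And>n. T ^^ Suc n = f \<circ> g ^^ n \<circ> h"
  shows "quasinilpotent_op T"
proof (rule quasinilpotent_opI_geometric_bound[OF T])
  fix \<epsilon> :: real assume e: "\<epsilon> > 0"
  obtain K where K0: "K \<ge> 0" and K: "\<And>n. onorm (g ^^ n) \<le> K * \<epsilon> ^ n"
    using quasinilpotent_op_geometric_bound[OF g qg e] by auto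
  define C where "C = onorm f * onorm h"
  have C0: "C \<ge> 0" unfolding C_def using onorm_pos_le[OF f] onorm_pos_le[OF h] by simp
  have "onorm (T ^^ n) \<le> (1 + C * K / \<epsilon>) * \<epsilon> ^ n" for n
  proof (cases n)
    case 0
    have "0 \<le> C * K / \<epsilon>" using C0 K0 e by simp
    moreover have "onorm (T ^^ 0) \<le> 1" using onorm_id_le by (simp add: id_def)
    ultimately show ?thesis using 0 by simp
  next
    case (Suc m)
    have "onorm (T ^^ n) = onorm ((f \<circ> g ^^ m) \<circ> h)" using powers[of m] Suc by simp
    also have "\<dots> \<le> onorm (f \<circ> g ^^ m) * onorm h"
      by (rule onorm_compose[OF bounded_linear_compose[OF f bounded_linear_funpow[OF g]] h, unfolded o_def[symmetric]])
    also have "\<dots> \<le> (onorm f * onorm (g ^^ m)) * onorm h"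
      by (rule mult_right_mono[OF onorm_compose[OF f bounded_linear_funpow[OF g]] onorm_pos_le[OF h]])
    also have "\<dots> \<le> (onorm f * (K * \<epsilon> ^ m)) * onorm h"
      using K onorm_pos_le[OF f] onorm_pos_le[OF h] by (intro mult_right_mono mult_left_mono) auto
    also have "\<dots> = (C * K / \<epsilon>) * \<epsilon> ^ n" using Suc e unfolding C_def by (simp add: field_simps)
    also have "\<dots> \<le> (1 + C * K / \<epsilon>) * \<epsilon> ^ n" using e by (intro mult_right_mono) auto
    finally show ?thesis .
  qed
  then show "\<exists>K. \<forall>n. onorm (T ^^ n) \<le> K * \<epsilon> ^ n" by blast
qed

lemma funpow_commute_apply:
  assumes "\<And>x. v (u x) = u (v x)"
  shows "u ((v ^^ n) y) = (v ^^ n) (u y)"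
  by (induction n arbitrary: y) (auto simp: assms[symmetric])

lemma funpow_commuting_compose:
  assumes "\<And>x. v (u x) = u (v x)"
  shows "(\<lambda>x. v (u x)) ^^ n = v ^^ n \<circ> u ^^ n"
proof (rule ext, induction n)
  case (Suc n y)
  then show ?case using funpow_commute_apply[of v u, OF assms] by simp
qed simp

lemma quasinilpotent_op_commuting_compose:
  fixes u v :: "'a::complex_normed_vector \<Rightarrow> 'a"
  assumes u: "bounded_linear u" and v: "bounded_linear v" and qu: "quasinilpotent_op u"
    and comm: "\<And>x. v (u x) = u (v x)"
  shows "quasinilpotent_op (\<lambda>x. v (u x))"
proof (rule quasinilpotent_opI_geometric_bound[OF bounded_linear_compose[OF v u]])
  fix \<epsilon> :: real assume e: "\<epsilon> > 0"
  define \<delta> where "\<delta> = \<epsilon> / (onorm v + 1)"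
  have v0: "onorm v \<ge> 0" by (rule onorm_pos_le[OF v])
  have \<delta>: "\<delta> > 0" "onorm v * \<delta> \<le> \<epsilon>" unfolding \<delta>_def using e v0 by (auto simp: field_simps)
  obtain K where K0: "K \<ge> 0" and K: "\<And>n. onorm (u ^^ n) \<le> K * \<delta> ^ n"
    using quasinilpotent_op_geometric_bound[OF u qu \<delta>(1)] by auto
  have "onorm ((\<lambda>x. v (u x)) ^^ n) \<le> K * \<epsilon> ^ n" for n
  proof -
    have "onorm ((\<lambda>x. v (u x)) ^^ n) \<le> onorm (v ^^ n) * onorm (u ^^ n)"
      unfolding funpow_commuting_compose[of v u, OF comm]
      by (rule onorm_compose[OF bounded_linear_funpow[OF v] bounded_linear_funpow[OF u]])
    also have "\<dots> \<le> onorm v ^ n * (K * \<delta> ^ n)"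
      using v0 onorm_pos_le[OF bounded_linear_funpow[OF u]]
      by (intro mult_mono[OF onorm_funpow_le[OF v] K]) auto
    also have "\<dots> = K * (onorm v * \<delta>) ^ n" by (simp add: power_mult_distrib)
    also have "\<dots> \<le> K * \<epsilon> ^ n"
      using K0 v0 \<delta> by (intro mult_left_mono power_mono) auto
    finally show ?thesis .
  qed
  then show "\<exists>K. \<forall>n. onorm ((\<lambda>x. v (u x)) ^^ n) \<le> K * \<epsilon> ^ n" by blast
qed

lemma quasinilpotent_op_of_square:
  fixes u :: "'a::complex_normed_vector \<Rightarrow> 'a"
  assumes u: "bounded_linear u" and q: "quasinilpotent_op (\<lambda>x. u (u x))"
  shows "quasinilpotent_op u"
proof (rule quasinilpotent_opI_geometric_bound[OF u])
  fix \<epsilon> :: real assume e: "\<epsilon> > 0"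
  have "(\<lambda>x. u (u x)) = u ^^ 2" by (simp add: fun_eq_iff numeral_2_eq_2)
  then obtain K where K0: "K \<ge> 0" and K: "\<And>k. onorm (u ^^ (2 * k)) \<le> K * \<epsilon> ^ (2 * k)"
    using quasinilpotent_op_geometric_bound[OF bounded_linear_compose[OF u u] q, of "\<epsilon>\<^sup>2"] e
    by (auto simp: funpow_mult power_mult)
  have u0: "onorm u \<ge> 0" by (rule onorm_pos_le[OF u])
  define K' where "K' = K + onorm u * K / \<epsilon>"
  have "onorm (u ^^ n) \<le> K' * \<epsilon> ^ n" for n
  proof (cases "even n")
    case True
    then obtain k where n: "n = 2 * k" by blast
    have "onorm (u ^^ n) \<le> K * \<epsilon> ^ n" using K[of k] n by simp
    also have "\<dots> \<le> K' * \<epsilon> ^ n" unfolding K'_def using e u0 K0 by (intro mult_right_mono) auto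
    finally show ?thesis .
  next
    case False
    then obtain k where n: "n = Suc (2 * k)" by (metis oddE Suc_eq_plus1)
    have "onorm (u ^^ n) \<le> onorm u * onorm (u ^^ (2 * k))"
      unfolding n funpow.simps(2) by (rule onorm_compose[OF u bounded_linear_funpow[OF u]])
    also have "\<dots> \<le> onorm u * (K * \<epsilon> ^ (2 * k))" by (rule mult_left_mono[OF K u0])
    also have "\<dots> = (onorm u * K / \<epsilon>) * \<epsilon> ^ n" using n e by (simp add: field_simps)
    also have "\<dots> \<le> K' * \<epsilon> ^ n" unfolding K'_def using e K0 by (intro mult_right_mono) auto
    finally show ?thesis .
  qed
  then show "\<exists>K. \<forall>n. onorm (u ^^ n) \<le> K * \<epsilon> ^ n" by blast
qed

lemma funpow_add_zero_product:
  fixes t1 t2 :: "'a::real_normed_vector \<Rightarrow> 'a"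
  assumes t1: "bounded_linear t1" and t2: "bounded_linear t2" and zero: "\<And>x. t1 (t2 x) = 0"
  shows "((\<lambda>x. t1 x + t2 x) ^^ n) x = (\<Sum>i\<le>n. (t2 ^^ i) ((t1 ^^ (n - i)) x))"
proof (induction n arbitrary: x)
  case (Suc n)
  interpret t1: bounded_linear t1 by fact
  interpret t2: bounded_linear t2 by fact
  have t1_sum: "t1 (\<Sum>i\<le>n. (t2 ^^ i) ((t1 ^^ (n - i)) x)) = t1 ((t1 ^^ n) x)"
  proof -
    have "t1 ((t2 ^^ i) y) = 0" if "i \<noteq> 0" for i y
      using that by (cases i) (simp_all add: zero)
    then have "t1 (\<Sum>i\<le>n. (t2 ^^ i) ((t1 ^^ (n - i)) x)) = (\<Sum>i\<in>{0}. t1 ((t2 ^^ i) ((t1 ^^ (n - i)) x)))"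
      unfolding t1.sum by (intro sum.mono_neutral_right) auto
    then show ?thesis by simp
  qed
  have "((\<lambda>x. t1 x + t2 x) ^^ Suc n) x
      = t1 ((t1 ^^ n) x) + (\<Sum>i\<le>n. t2 ((t2 ^^ i) ((t1 ^^ (n - i)) x)))"
    using Suc by (simp add: t1_sum t2.sum)
  also have "\<dots> = (\<Sum>i\<le>Suc n. (t2 ^^ i) ((t1 ^^ (Suc n - i)) x))"
    by (simp del: sum.atMost_Suc add: sum.atMost_Suc_shift)
  finally show ?case .
qed simp

lemma onorm_funpow_add_zero_product_le:
  fixes t1 t2 :: "'a::real_normed_vector \<Rightarrow> 'a"
  assumes t1: "bounded_linear t1" and t2: "bounded_linear t2" and zero: "\<And>x. t1 (t2 x) = 0"
  shows "onorm ((\<lambda>x. t1 x + t2 x) ^^ n) \<le> (\<Sum>i\<le>n. onorm (t2 ^^ i) * onorm (t1 ^^ (n - i)))"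
proof -
  have "(\<lambda>x. t1 x + t2 x) ^^ n = (\<lambda>x. \<Sum>i\<le>n. (t2 ^^ i \<circ> t1 ^^ (n - i)) x)"
    using funpow_add_zero_product[OF t1 t2 zero] by (auto simp: fun_eq_iff)
  then have "onorm ((\<lambda>x. t1 x + t2 x) ^^ n) \<le> (\<Sum>i\<le>n. onorm (t2 ^^ i \<circ> t1 ^^ (n - i)))"
    by (simp only:) (rule onorm_sum,
      auto intro: bounded_linear_compose bounded_linear_funpow t1 t2 simp: comp_def)
  also have "\<dots> \<le> (\<Sum>i\<le>n. onorm (t2 ^^ i) * onorm (t1 ^^ (n - i)))"
    by (intro sum_mono onorm_compose bounded_linear_funpow t1 t2)
  finally show ?thesis .
qed

lemma quasinilpotent_op_add_zero_product:
  fixes t1 t2 :: "'a::complex_normed_vector \<Rightarrow> 'a"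
  assumes t1: "bounded_linear t1" and t2: "bounded_linear t2" and zero: "\<And>x. t1 (t2 x) = 0"
    and q1: "quasinilpotent_op t1" and q2: "quasinilpotent_op t2"
  shows "quasinilpotent_op (\<lambda>x. t1 x + t2 x)"
proof (rule quasinilpotent_opI_geometric_bound[OF bounded_linear_add[OF t1 t2]])
  fix \<epsilon> :: real assume e: "\<epsilon> > 0"
  obtain K1 where K10: "K1 \<ge> 0" and K1: "\<And>n. onorm (t1 ^^ n) \<le> K1 * (\<epsilon> / 2) ^ n"
    using quasinilpotent_op_geometric_bound[OF t1 q1, of "\<epsilon> / 2"] e by auto
  obtain K2 where K20: "K2 \<ge> 0" and K2: "\<And>n. onorm (t2 ^^ n) \<le> K2 * (\<epsilon> / 2) ^ n"
    using quasinilpotent_op_geometric_bound[OF t2 q2, of "\<epsilon> / 2"] e by auto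
  have "onorm ((\<lambda>x. t1 x + t2 x) ^^ n) \<le> (K2 * K1) * \<epsilon> ^ n" for n
  proof -
    have "onorm ((\<lambda>x. t1 x + t2 x) ^^ n) \<le> (\<Sum>i\<le>n. onorm (t2 ^^ i) * onorm (t1 ^^ (n - i)))"
      by (rule onorm_funpow_add_zero_product_le[OF t1 t2 zero])
    also have "\<dots> \<le> (\<Sum>i\<le>n. (K2 * (\<epsilon> / 2) ^ i) * (K1 * (\<epsilon> / 2) ^ (n - i)))"
      using K20 e onorm_pos_le[OF bounded_linear_funpow[OF t1]]
      by (intro sum_mono mult_mono K1 K2) auto
    also have "\<dots> = (\<Sum>i\<le>n. (K2 * K1) * (\<epsilon> / 2) ^ n)"
      by (intro sum.cong refl) (simp add: power_add[symmetric] mult_ac)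
    also have "\<dots> = (K2 * K1) * (real (Suc n) * (\<epsilon> / 2) ^ n)" by simp
    also have "\<dots> \<le> (K2 * K1) * \<epsilon> ^ n"
    proof (rule mult_left_mono)
      have "real (Suc n) \<le> 2 ^ n"
        using less_exp[of n] by (metis Suc_leI of_nat_le_iff of_nat_numeral of_nat_power)
      then have "real (Suc n) * (\<epsilon> / 2) ^ n \<le> 2 ^ n * (\<epsilon> / 2) ^ n" using e by (intro mult_right_mono) auto
      also have "\<dots> = \<epsilon> ^ n" by (simp add: power_mult_distrib[symmetric])
      finally show "real (Suc n) * (\<epsilon> / 2) ^ n \<le> \<epsilon> ^ n" .
    qed (use K10 K20 in simp)
    finally show ?thesis .
  qed
  then show "\<exists>K. \<forall>n. onorm ((\<lambda>x. t1 x + t2 x) ^^ n) \<le> K * \<epsilon> ^ n" by blast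
qed

lemma quasinilpotent_op_lower_triangular:
  fixes t :: "'x::complex_normed_vector \<Rightarrow> 'x" and k :: "'x \<Rightarrow> 'y::complex_normed_vector"
    and s :: "'y \<Rightarrow> 'y"
  assumes t: "bounded_linear t" and k: "bounded_linear k" and s: "bounded_linear s"
    and qt: "quasinilpotent_op t" and qs: "quasinilpotent_op s"
  shows "quasinilpotent_op (op_matrix t (\<lambda>_. 0) k s)"
proof -
  define t1 where "t1 z = (t (fst z), k (fst z))" for z :: "'x \<times> 'y"
  define t2 where "t2 z = ((0::'x), s (snd z))" for z :: "'x \<times> 'y"
  have bl1: "bounded_linear t1" unfolding t1_def[abs_def]
    by (intro bounded_linear_Pair bounded_linear_compose[OF t] bounded_linear_compose[OF k] bounded_linear_fst)
  have bl2: "bounded_linear t2" unfolding t2_def[abs_def]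
    by (intro bounded_linear_Pair bounded_linear_zero bounded_linear_compose[OF s] bounded_linear_snd)
  have zero: "t1 (t2 z) = 0" for z
    unfolding t1_def t2_def using linear_simps(3)[OF t] linear_simps(3)[OF k] by (simp add: zero_prod_def)
  have "t1 ^^ Suc n = (\<lambda>v. (t v, k v)) \<circ> t ^^ n \<circ> fst" for n
    by (induction n) (auto simp: fun_eq_iff t1_def)
  then have q1: "quasinilpotent_op t1"
    by (rule quasinilpotent_op_factor_powers[OF bl1 bounded_linear_Pair[OF t k] bounded_linear_fst t qt])
  have "t2 ^^ Suc n = (\<lambda>v. ((0::'x), v)) \<circ> s ^^ n \<circ> (\<lambda>z. s (snd z))" for n
    by (induction n) (auto simp: fun_eq_iff t2_def)
  then have q2: "quasinilpotent_op t2"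
    by (rule quasinilpotent_op_factor_powers[OF bl2 bounded_linear_Pair[OF bounded_linear_zero bounded_linear_ident]
          bounded_linear_compose[OF s bounded_linear_snd] s qs])
  have "op_matrix t (\<lambda>_. 0) k s = (\<lambda>z. t1 z + t2 z)"
    by (auto simp: fun_eq_iff op_matrix_apply t1_def t2_def)
  then show ?thesis using quasinilpotent_op_add_zero_product[OF bl1 bl2 zero q1 q2] by simp
qed

lemma summable_power_onorm_funpow:
  fixes t :: "'a::complex_normed_vector \<Rightarrow> 'a"
  assumes t: "bounded_linear t" and qt: "quasinilpotent_op t" and r: "r \<ge> 0"
  shows "summable (\<lambda>n. r ^ n * onorm (t ^^ n))"
proof -
  define \<epsilon> where "\<epsilon> = 1 / (2 * (r + 1))"
  have \<epsilon>: "\<epsilon> > 0" "r * \<epsilon> \<le> 1 / 2" unfolding \<epsilon>_def using r by (auto simp: field_simps)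
  obtain K where K0: "K \<ge> 0" and K: "\<And>n. onorm (t ^^ n) \<le> K * \<epsilon> ^ n"
    using quasinilpotent_op_geometric_bound[OF t qt \<epsilon>(1)] by auto
  have bound: "norm (r ^ n * onorm (t ^^ n)) \<le> K * (1 / 2) ^ n" for n
  proof -
    have "norm (r ^ n * onorm (t ^^ n)) \<le> r ^ n * (K * \<epsilon> ^ n)"
      using K r onorm_pos_le[OF bounded_linear_funpow[OF t]] by (simp add: mult_left_mono)
    also have "\<dots> = K * (r * \<epsilon>) ^ n" by (simp add: power_mult_distrib)
    also have "\<dots> \<le> K * (1 / 2) ^ n" using \<epsilon> r K0 by (intro mult_left_mono power_mono) auto
    finally show ?thesis .
  qed
  have "summable (\<lambda>n. K * (1 / 2 :: real) ^ n)" by (intro summable_mult summable_geometric) simp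
  then show ?thesis by (rule summable_comparison_test') (rule bound)
qed

lemma norm_eq_zero_if_le_power_onorm_funpow:
  fixes t :: "'a::complex_normed_vector \<Rightarrow> 'a"
  assumes t: "bounded_linear t" and qt: "quasinilpotent_op t" and r: "r \<ge> 0"
    and bound: "\<And>n. norm x \<le> c * (r ^ n * onorm (t ^^ n))"
  shows "x = 0"
proof -
  have "(\<lambda>n. r ^ n * onorm (t ^^ n)) \<longlonglongrightarrow> 0"
    by (rule summable_LIMSEQ_zero[OF summable_power_onorm_funpow[OF t qt r]])
  then have "(\<lambda>n. c * (r ^ n * onorm (t ^^ n))) \<longlonglongrightarrow> 0"
    by (rule tendsto_mult_right_zero)
  then have "norm x \<le> 0" by (rule LIMSEQ_le_const) (use bound in auto)
  then show ?thesis by simp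
qed

lemma eq_zero_if_intertwines_quasinilpotent_right:
  fixes t :: "'a::complex_normed_vector \<Rightarrow> 'a" and Z :: "'a \<Rightarrow> 'b::real_normed_vector"
  assumes Z: "bounded_linear Z" and s: "bounded_linear s" and t: "bounded_linear t"
    and qt: "quasinilpotent_op t" and step: "\<And>v. Z v = s (Z (t v))"
  shows "Z v = 0"
proof -
  have iterate: "Z v = (s ^^ n) (Z ((t ^^ n) v))" for n v
  proof (induction n arbitrary: v)
    case (Suc n)
    have "Z v = s ((s ^^ n) (Z ((t ^^ n) (t v))))" using step[of v] Suc[of "t v"] by simp
    then show ?case by (simp add: funpow_swap1)
  qed simp
  have "norm (Z v) \<le> norm v * (onorm Z * (onorm s ^ n * onorm (t ^^ n)))" for n
  proof -
    have "norm (Z v) \<le> onorm s ^ n * (onorm Z * (onorm (t ^^ n) * norm v))"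
      unfolding iterate[of v n]
      by (intro norm_funpow_le[OF s] norm_le_onorm_mult[OF Z] onorm[OF bounded_linear_funpow[OF t]])
    then show ?thesis by (simp add: mult_ac)
  qed
  then have "norm (Z v) \<le> norm v * onorm Z * (onorm s ^ n * onorm (t ^^ n))" for n
    by (simp add: mult.assoc)
  then show ?thesis
    by (rule norm_eq_zero_if_le_power_onorm_funpow[OF t qt onorm_pos_le[OF s], of "Z v", simplified])
qed

lemma eq_zero_if_intertwines_quasinilpotent_left:
  fixes t :: "'a::complex_normed_vector \<Rightarrow> 'a" and Z :: "'b::real_normed_vector \<Rightarrow> 'a"
  assumes Z: "bounded_linear Z" and s: "bounded_linear s" and t: "bounded_linear t"
    and qt: "quasinilpotent_op t" and step: "\<And>v. Z v = t (Z (s v))"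
  shows "Z v = 0"
proof -
  have iterate: "Z v = (t ^^ n) (Z ((s ^^ n) v))" for n v
  proof (induction n arbitrary: v)
    case (Suc n)
    have "Z v = t ((t ^^ n) (Z ((s ^^ n) (s v))))" using step[of v] Suc[of "s v"] by simp
    then show ?case by (simp add: funpow_swap1)
  qed simp
  have "norm (Z v) \<le> onorm (t ^^ n) * (onorm Z * (onorm s ^ n * norm v))" for n
    unfolding iterate[of v n]
    by (intro norm_le_onorm_mult[OF bounded_linear_funpow[OF t]] norm_le_onorm_mult[OF Z]
        norm_funpow_le[OF s] order_refl)
  then have "norm (Z v) \<le> norm v * onorm Z * (onorm s ^ n * onorm (t ^^ n))" for n
    by (simp add: mult_ac)
  then show ?thesis
    by (rule norm_eq_zero_if_le_power_onorm_funpow[OF t qt onorm_pos_le[OF s], of "Z v", simplified])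
qed

subsection \<open>g-Drazin inverses\<close>

definition gDrazin_inverse :: "('a::complex_normed_vector \<Rightarrow> 'a) \<Rightarrow> ('a \<Rightarrow> 'a) \<Rightarrow> bool" where
  "gDrazin_inverse T S \<longleftrightarrow> clin_op S \<and> (\<forall>x. S (T (S x)) = S x) \<and> (\<forall>x. T (S x) = S (T x)) \<and>
     quasinilpotent_op (\<lambda>x. T x - T (T (S x)))"

lemma has_gDrazin_iff_gDrazin_inverse: "has_gDrazin T \<longleftrightarrow> (\<exists>S. gDrazin_inverse T S)"
  unfolding has_gDrazin_def gDrazin_inverse_def by (auto simp: fun_eq_iff)

lemma gDrazin_inverseD:
  assumes "gDrazin_inverse T S"
  shows "clin_op S" "S (T (S x)) = S x" "T (S x) = S (T x)" "S (S (T x)) = S x"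
    "quasinilpotent_op (\<lambda>x. T x - T (T (S x)))"
  using assms unfolding gDrazin_inverse_def by metis+

lemma gDrazin_inverse_nilpotent:
  fixes T :: "'a::complex_normed_vector \<Rightarrow> 'a"
  assumes T: "clin_op T" and nil: "T ^^ k = (\<lambda>_. 0)"
  shows "gDrazin_inverse T (\<lambda>_. 0)"
proof -
  have T: "bounded_linear T" using T by (rule clin_op_bounded_linear)
  then have "(\<lambda>x. T x - T (T 0)) = T" by (simp add: linear_simps)
  then show ?thesis
    unfolding gDrazin_inverse_def using quasinilpotent_op_nilpotent[OF T nil] linear_simps(3)[OF T]
    by (auto simp: clin_op_zero)
qed

lemma gDrazin_inverse_square:
  fixes T :: "'a::complex_normed_vector \<Rightarrow> 'a"
  assumes T: "clin_op T" and S: "gDrazin_inverse T S"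
  shows "gDrazin_inverse (\<lambda>x. T (T x)) (\<lambda>x. S (S x))"
proof -
  have blT: "bounded_linear T" and blS: "bounded_linear S"
    using T gDrazin_inverseD(1)[OF S] by (auto dest: clin_op_bounded_linear)
  note S_simps = gDrazin_inverseD(3,4)[OF S]
  define u where "u x = T x - T (T (S x))" for x
  have blu: "bounded_linear u" unfolding u_def
    by (intro bounded_linear_sub bounded_linear_compose[OF blT] blT blS)
  have "quasinilpotent_op (\<lambda>x. T (u x))"
    by (rule quasinilpotent_op_commuting_compose[OF blu blT])
      (use gDrazin_inverseD(5)[OF S] in \<open>auto simp: u_def[abs_def] linear_simps[OF blT] S_simps\<close>)
  moreover have "(\<lambda>x. T (u x)) = (\<lambda>x. T (T x) - T (T (T (T (S (S x))))))"
    unfolding u_def by (auto simp: fun_eq_iff linear_simps[OF blT] S_simps)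
  ultimately show ?thesis
    using clin_op_compose[OF gDrazin_inverseD(1)[OF S] gDrazin_inverseD(1)[OF S]]
    unfolding gDrazin_inverse_def by (auto simp: S_simps)
qed

text \<open>With \<open>\<pi> = 1 - T S\<close>, the operators \<open>S K \<pi>\<close> and \<open>\<pi> K S\<close> are intertwined by \<open>S\<close> with the
  quasinilpotent part \<open>T \<pi>\<close> and hence vanish; this puts \<open>S\<close> in the double commutant of \<open>T\<close>.\<close>

context
  fixes T S K :: "'a::complex_normed_vector \<Rightarrow> 'a"
  assumes T: "clin_op T" and S: "gDrazin_inverse T S" and K: "bounded_linear K"
    and commute: "\<And>x. K (T x) = T (K x)"
begin

private lemma bounded_linear_T: "bounded_linear T"
  using T by (rule clin_op_bounded_linear)

private lemma bounded_linear_S: "bounded_linear S"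
  using gDrazin_inverseD(1)[OF S] by (rule clin_op_bounded_linear)

private lemmas S_simps = gDrazin_inverseD(3,4)[OF S]
  and linear = linear_simps[OF bounded_linear_T] linear_simps[OF bounded_linear_S] linear_simps[OF K]

private lemma quasinilpotent_part: "quasinilpotent_op (\<lambda>v. T v - T (T (S v)))"
  and bounded_linear_quasinilpotent_part: "bounded_linear (\<lambda>v. T v - T (T (S v)))"
  using gDrazin_inverseD(5)[OF S]
  by (auto intro!: bounded_linear_sub bounded_linear_T bounded_linear_compose[OF bounded_linear_T]
      bounded_linear_compose[OF bounded_linear_S])

lemma gDrazin_inverse_commuting_spectral_right: "S (K (x - T (S x))) = 0"
proof -
  define Z where "Z v = T (S (K (v - T (S v))))" for v
  have "Z v = 0" for v
  proof (rule eq_zero_if_intertwines_quasinilpotent_right[where Z = Z,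
      OF _ bounded_linear_S bounded_linear_quasinilpotent_part quasinilpotent_part])
    show "bounded_linear Z" unfolding Z_def[abs_def]
      by (intro bounded_linear_compose[OF bounded_linear_T] bounded_linear_compose[OF bounded_linear_S]
          bounded_linear_compose[OF K] bounded_linear_sub bounded_linear_ident)
    have SKS: "S (S (K (S (T z)))) = S (K (S z))" for z by (metis commute S_simps)
    have STK: "S (T (K (S z))) = S (K (S (T z)))" for z by (metis commute S_simps)
    show "Z v = S (Z (T v - T (T (S v))))" for v
      unfolding Z_def by (simp add: linear S_simps commute SKS STK)
  qed
  then have "S (Z x) = 0" using linear by simp
  then show ?thesis unfolding Z_def by (simp add: gDrazin_inverseD(2)[OF S])
qed

lemma gDrazin_inverse_commuting_spectral_left: "K (S x) - T (S (K (S x))) = 0"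
proof -
  define Y where "Y v = K (T (S v)) - T (S (K (T (S v))))" for v
  have "Y v = 0" for v
  proof (rule eq_zero_if_intertwines_quasinilpotent_left[where Z = Y,
      OF _ bounded_linear_S bounded_linear_quasinilpotent_part quasinilpotent_part])
    show "bounded_linear Y" unfolding Y_def[abs_def]
      by (intro bounded_linear_sub bounded_linear_compose[OF bounded_linear_T]
          bounded_linear_compose[OF bounded_linear_S] bounded_linear_compose[OF K] bounded_linear_ident)
    have SKS: "S (S (K (S (T z)))) = S (K (S z))" for z by (metis commute S_simps)
    show "Y v = T (Y (S v)) - T (T (S (Y (S v))))" for v
      unfolding Y_def by (simp add: linear S_simps commute[symmetric] SKS)
  qed
  moreover have "T (S (S x)) = S x" by (simp add: S_simps)
  ultimately show ?thesis using Y_def by metis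
qed

lemma gDrazin_inverse_commute: "K (S x) = S (K x)"
proof -
  have "S (K x) = S (K (T (S x)))"
    using gDrazin_inverse_commuting_spectral_right[of x] by (simp add: linear)
  also have "\<dots> = S (T (K (S x)))" by (simp add: commute)
  also have "\<dots> = T (S (K (S x)))" by (simp add: S_simps)
  also have "\<dots> = K (S x)" using gDrazin_inverse_commuting_spectral_left[of x] by simp
  finally show ?thesis by simp
qed

end

lemma gDrazin_inverse_of_square:
  fixes T :: "'a::complex_normed_vector \<Rightarrow> 'a"
  assumes T: "clin_op T" and y: "gDrazin_inverse (\<lambda>x. T (T x)) y"
  shows "gDrazin_inverse T (\<lambda>x. T (y x))"
proof -
  have blT: "bounded_linear T" and bly: "bounded_linear y"
    using T gDrazin_inverseD(1)[OF y] by (auto dest: clin_op_bounded_linear)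
  have commute: "T (y x) = y (T x)" for x
    by (rule gDrazin_inverse_commute[OF clin_op_compose[OF T T] y blT]) simp
  have absorb: "T (T (y (y x))) = y x" for x
    using gDrazin_inverseD(2)[OF y] commute by metis
  define u where "u x = T x - T (T (T (y x)))" for x
  have blu: "bounded_linear u" unfolding u_def[abs_def]
    by (intro bounded_linear_sub blT bounded_linear_compose[OF blT] bounded_linear_compose[OF bly]
        bounded_linear_ident)
  have "(\<lambda>x. u (u x)) = (\<lambda>x. T (T x) - T (T (T (T (y x)))))"
    unfolding u_def by (auto simp: fun_eq_iff linear_simps[OF blT] linear_simps[OF bly] commute[symmetric] absorb)
  then have "quasinilpotent_op u"
    using quasinilpotent_op_of_square[OF blu] gDrazin_inverseD(5)[OF y] by simp
  then show ?thesis
    using clin_op_compose[OF T gDrazin_inverseD(1)[OF y]] gDrazin_inverseD(2)[OF y]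
    unfolding gDrazin_inverse_def u_def[abs_def] by (simp add: commute)
qed

theorem gDrazin_inverse_Cline:
  fixes U :: "'b::complex_normed_vector \<Rightarrow> 'a::complex_normed_vector" and V :: "'a \<Rightarrow> 'b"
  assumes U: "clin_op U" and V: "clin_op V" and y: "gDrazin_inverse (\<lambda>x. V (U x)) y"
  shows "gDrazin_inverse (\<lambda>x. U (V x)) (\<lambda>x. U (y (y (V x))))"
proof -
  have blU: "bounded_linear U" and blV: "bounded_linear V" and bly: "bounded_linear y"
    using U V gDrazin_inverseD(1)[OF y] by (auto dest: clin_op_bounded_linear)
  note y_simps = gDrazin_inverseD(3,4)[OF y]
  define p where "p w = w - y (V (U w))" for w
  define g where "g w = V (U w) - V (U (V (U (y w))))" for w
  define F where "F x = U (V x) - U (V (U (V (U (y (y (V x)))))))" for x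
  have F_eq: "F x = U (p (V x))" for x
    unfolding F_def p_def by (simp add: linear_simps[OF blU] y_simps)
  have "F ^^ Suc n = U \<circ> g ^^ n \<circ> (\<lambda>x. p (V x))" for n
  proof (induction n)
    case (Suc n)
    have "p (V (U w)) = g w" for w unfolding p_def g_def by (simp add: y_simps)
    with Suc show ?case by (auto simp: fun_eq_iff F_eq)
  qed (auto simp: fun_eq_iff F_eq)
  moreover have "bounded_linear p" unfolding p_def[abs_def]
    by (intro bounded_linear_sub bounded_linear_ident bounded_linear_compose[OF bly]
        bounded_linear_compose[OF blV blU])
  moreover have "bounded_linear g" unfolding g_def[abs_def]
    by (intro bounded_linear_sub bounded_linear_compose[OF blV] bounded_linear_compose[OF blU] bly blU blV)
  moreover have "bounded_linear F" unfolding F_def[abs_def]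
    by (intro bounded_linear_sub bounded_linear_compose[OF blU] bounded_linear_compose[OF blV]
        bounded_linear_compose[OF bly] blV)
  ultimately have "quasinilpotent_op F"
    using quasinilpotent_op_factor_powers[OF _ blU bounded_linear_compose[OF _ blV] _ gDrazin_inverseD(5)[OF y]]
    unfolding g_def[abs_def] by blast
  then show ?thesis
    using clin_op_compose[OF U clin_op_compose[OF gDrazin_inverseD(1)[OF y]
        clin_op_compose[OF gDrazin_inverseD(1)[OF y] V]]]
    unfolding gDrazin_inverse_def F_def[abs_def] by (auto simp: y_simps)
qed

subsection \<open>Lower triangular operator matrices\<close>

lemma funpow_eq_on_range_idempotent:
  assumes q: "\<And>u. q u = f (p u)" and commute: "\<And>u. p (f u) = f (p u)" and idem: "\<And>u. p (p u) = p u"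
  shows "(q ^^ n) (p x) = (f ^^ n) (p x)"
proof (induction n)
  case (Suc n)
  have "(q ^^ Suc n) (p x) = q ((f ^^ n) (p x))" using Suc by simp
  also have "\<dots> = f (p ((f ^^ n) (p x)))" by (rule q)
  also have "\<dots> = (f ^^ Suc n) (p x)"
    using funpow_commute_apply[of f p, OF commute[symmetric]] by (simp add: idem)
  finally show ?case .
qed simp

locale gDrazin_lower_triangular =
  fixes a :: "'x::complex_normed_vector \<Rightarrow> 'x" and \<alpha> :: "'x \<Rightarrow> 'x"
    and b :: "'y::{complex_normed_vector,banach} \<Rightarrow> 'y" and \<beta> :: "'y \<Rightarrow> 'y" and c :: "'x \<Rightarrow> 'y"
  assumes a: "clin_op a" and b: "clin_op b" and c: "clin_op c"
    and \<alpha>: "gDrazin_inverse a \<alpha>" and \<beta>: "gDrazin_inverse b \<beta>"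
begin

lemma bounded_linear_ops:
  "bounded_linear a" "bounded_linear b" "bounded_linear c" "bounded_linear \<alpha>" "bounded_linear \<beta>"
  using a b c gDrazin_inverseD(1)[OF \<alpha>] gDrazin_inverseD(1)[OF \<beta>] by (auto dest: clin_op_bounded_linear)

lemmas linear_ops = linear_simps[OF bounded_linear_ops(1)] linear_simps[OF bounded_linear_ops(2)]
  linear_simps[OF bounded_linear_ops(3)] linear_simps[OF bounded_linear_ops(4)] linear_simps[OF bounded_linear_ops(5)]

lemmas op_simps = linear_ops gDrazin_inverseD(3,4)[OF \<alpha>] gDrazin_inverseD(3,4)[OF \<beta>]

text \<open>\<open>pi_a\<close> is the spectral idempotent \<open>1 - \<alpha> a\<close> of \<open>a\<close>, and \<open>qnil_a = a pi_a\<close> its quasinilpotent part.\<close>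

definition "pi_a z = z - \<alpha> (a z)"
definition "pi_b z = z - \<beta> (b z)"
definition "qnil_a z = a z - a (a (\<alpha> z))"
definition "qnil_b z = b z - b (b (\<beta> z))"

lemma quasinilpotent_qnil: "quasinilpotent_op qnil_a" "quasinilpotent_op qnil_b"
  using gDrazin_inverseD(5)[OF \<alpha>] gDrazin_inverseD(5)[OF \<beta>]
  unfolding qnil_a_def[abs_def] qnil_b_def[abs_def] by auto

lemma clin_op_pi: "clin_op pi_a" "clin_op pi_b"
  unfolding pi_a_def[abs_def] pi_b_def[abs_def]
  by (intro clin_op_diff clin_op_ident clin_op_compose[OF gDrazin_inverseD(1)[OF \<alpha>] a]
      clin_op_compose[OF gDrazin_inverseD(1)[OF \<beta>] b])+

lemma bounded_linear_pi: "bounded_linear pi_a" "bounded_linear pi_b"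
  using clin_op_pi by (auto dest: clin_op_bounded_linear)

lemma bounded_linear_qnil: "bounded_linear qnil_a" "bounded_linear qnil_b"
  unfolding qnil_a_def[abs_def] qnil_b_def[abs_def] using bounded_linear_ops
  by (auto intro!: bounded_linear_sub bounded_linear_compose[of a] bounded_linear_compose[of b])

lemma pi_commute: "pi_a (a x) = a (pi_a x)" "pi_b (b y) = b (pi_b y)"
  unfolding pi_a_def pi_b_def by (simp_all add: op_simps)

lemma pi_idem: "pi_a (pi_a x) = pi_a x" "pi_b (pi_b y) = pi_b y"
  unfolding pi_a_def pi_b_def by (simp_all add: op_simps)

lemma funpow_qnil_pi:
  "(qnil_a ^^ n) (pi_a x) = (a ^^ n) (pi_a x)" "(qnil_b ^^ n) (pi_b y) = (b ^^ n) (pi_b y)"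
proof -
  have qnil: "qnil_a u = a (pi_a u)" "qnil_b v = b (pi_b v)" for u v
    unfolding qnil_a_def qnil_b_def pi_a_def pi_b_def by (simp_all add: op_simps)
  show "(qnil_a ^^ n) (pi_a x) = (a ^^ n) (pi_a x)"
    by (rule funpow_eq_on_range_idempotent) (fact qnil(1), fact pi_commute(1), fact pi_idem(1))
  show "(qnil_b ^^ n) (pi_b y) = (b ^^ n) (pi_b y)"
    by (rule funpow_eq_on_range_idempotent) (fact qnil(2), fact pi_commute(2), fact pi_idem(2))
qed


text \<open>The g-Drazin inverse of \<open>[[a, 0], [c, b]]\<close> is \<open>[[\<alpha>, 0], [corner, \<beta>]]\<close> with
  \<open>corner = (\<Sum>n. \<beta>\<^sup>n\<^sup>+\<^sup>2 c a\<^sup>n pi_a) + (\<Sum>n. pi_b b\<^sup>n c \<alpha>\<^sup>n\<^sup>+\<^sup>2) - \<beta> c \<alpha>\<close>. The series converge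
  because \<open>a\<^sup>n pi_a = qnil_a\<^sup>n pi_a\<close> and \<open>pi_b b\<^sup>n = qnil_b\<^sup>n pi_b\<close>.\<close>

definition "term_a n = \<beta> \<circ> \<beta> \<circ> \<beta> ^^ n \<circ> c \<circ> a ^^ n \<circ> pi_a"
definition "term_b n = pi_b \<circ> b ^^ n \<circ> c \<circ> \<alpha> ^^ n \<circ> \<alpha> \<circ> \<alpha>"

lemma clin_op_term: "clin_op (term_a n)" "clin_op (term_b n)"
  unfolding term_a_def term_b_def
  using a b c gDrazin_inverseD(1)[OF \<alpha>] gDrazin_inverseD(1)[OF \<beta>] clin_op_pi
  by (auto intro!: clin_op_comp clin_op_funpow)

lemma norm_term_a_le:
  "norm (term_a n z) \<le> (onorm \<beta> * onorm \<beta> * onorm c * onorm pi_a) * (onorm \<beta> ^ n * onorm (qnil_a ^^ n)) * norm z"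
proof -
  have "norm (term_a n z) \<le> onorm \<beta> * (onorm \<beta> * (onorm \<beta> ^ n * (onorm c * (onorm (qnil_a ^^ n) * (onorm pi_a * norm z)))))"
    unfolding term_a_def comp_apply funpow_qnil_pi(1)[symmetric]
    by (intro norm_le_onorm_mult norm_funpow_le bounded_linear_ops bounded_linear_funpow bounded_linear_qnil
        onorm bounded_linear_pi)
  then show ?thesis by (simp add: mult_ac)
qed

lemma norm_term_b_le:
  "norm (term_b n z) \<le> (onorm pi_b * onorm c * onorm \<alpha> * onorm \<alpha>) * (onorm \<alpha> ^ n * onorm (qnil_b ^^ n)) * norm z"
proof -
  have "term_b n z = (qnil_b ^^ n) (pi_b (c ((\<alpha> ^^ n) (\<alpha> (\<alpha> z)))))"
    unfolding term_b_def comp_apply funpow_qnil_pi(2)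
    by (simp add: funpow_commute_apply[of b pi_b, OF pi_commute(2)[symmetric]])
  also have "norm \<dots> \<le> onorm (qnil_b ^^ n) * (onorm pi_b * (onorm c * (onorm \<alpha> ^ n * (onorm \<alpha> * (onorm \<alpha> * norm z)))))"
    by (intro norm_le_onorm_mult norm_funpow_le bounded_linear_ops bounded_linear_funpow bounded_linear_qnil
        onorm bounded_linear_pi)
  finally show ?thesis by (simp add: mult_ac)
qed

lemma summable_term_bound: "summable (\<lambda>n. K * (onorm \<beta> ^ n * onorm (qnil_a ^^ n)))"
  "summable (\<lambda>n. L * (onorm \<alpha> ^ n * onorm (qnil_b ^^ n)))"
  using bounded_linear_qnil quasinilpotent_qnil bounded_linear_ops
  by (auto intro!: summable_mult summable_power_onorm_funpow onorm_pos_le)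

definition "series_a z = (\<Sum>n. term_a n z)"
definition "series_b z = (\<Sum>n. term_b n z)"

lemma summable_term: "summable (\<lambda>n. term_a n z)" "summable (\<lambda>n. term_b n z)"
  using summable_clin_op_series[OF clin_op_term(1) norm_term_a_le summable_term_bound(1)]
    summable_clin_op_series[OF clin_op_term(2) norm_term_b_le summable_term_bound(2)] by auto

lemma clin_op_series: "clin_op series_a" "clin_op series_b"
  unfolding series_a_def[abs_def] series_b_def[abs_def]
  using clin_op_suminf[OF clin_op_term(1) norm_term_a_le summable_term_bound(1)]
    clin_op_suminf[OF clin_op_term(2) norm_term_b_le summable_term_bound(2)] by auto


definition "corner z = series_a z + series_b z - \<beta> (c (\<alpha> z))"

lemma clin_op_corner: "clin_op corner"
  unfolding corner_def[abs_def]
  by (intro clin_op_diff clin_op_add clin_op_series clin_op_compose[OF gDrazin_inverseD(1)[OF \<beta>]]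
      clin_op_compose[OF c gDrazin_inverseD(1)[OF \<alpha>]])

lemma corner_intertwines: "b (corner z) - corner (a z) = \<beta> (c z) - c (\<alpha> z)"
proof -
  define f where "f n = \<beta> ((\<beta> ^^ n) (c ((a ^^ n) (pi_a z))))" for n
  have "b (term_a n z) = f n" for n unfolding f_def term_a_def by (simp add: op_simps)
  then have "summable f" and b_series_a: "b (series_a z) = suminf f"
    using bounded_linear.summable[OF bounded_linear_ops(2) summable_term(1)[of z]]
      bounded_linear.suminf[OF bounded_linear_ops(2) summable_term(1)[of z]]
    unfolding series_a_def by simp_all
  have "term_a n (a z) = f (Suc n)" for n
    unfolding f_def term_a_def by (simp add: pi_commute funpow_swap1)
  then have series_a_a: "series_a (a z) = suminf f - f 0"
    unfolding series_a_def by (simp add: suminf_split_head[OF \<open>summable f\<close>])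
  define g where "g n = pi_b ((b ^^ n) (c ((\<alpha> ^^ n) (\<alpha> z))))" for n
  have "term_b n (a z) = g n" for n unfolding g_def term_b_def by (simp add: op_simps)
  then have "summable g" and series_b_a: "series_b (a z) = suminf g"
    using summable_term(2)[of "a z"] unfolding series_b_def by simp_all
  have "b (term_b n z) = g (Suc n)" for n
    unfolding g_def term_b_def by (simp add: pi_commute(2)[symmetric] funpow_swap1)
  then have b_series_b: "b (series_b z) = suminf g - g 0"
    using bounded_linear.suminf[OF bounded_linear_ops(2) summable_term(2)[of z]]
    unfolding series_b_def by (simp add: suminf_split_head[OF \<open>summable g\<close>])
  have "b (corner z) - corner (a z)
      = (b (series_a z) - series_a (a z)) + (b (series_b z) - series_b (a z)) - b (\<beta> (c (\<alpha> z))) + \<beta> (c (\<alpha> (a z)))"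
    unfolding corner_def by (simp add: linear_ops)
  also have "\<dots> = f 0 - g 0 - b (\<beta> (c (\<alpha> z))) + \<beta> (c (\<alpha> (a z)))"
    by (simp add: b_series_a series_a_a b_series_b series_b_a)
  also have "\<dots> = \<beta> (c z) - c (\<alpha> z)"
    unfolding f_def g_def pi_a_def pi_b_def by (simp add: op_simps)
  finally show ?thesis .
qed


lemma corner_absorbs: "corner (\<alpha> (a z)) + \<beta> (c (\<alpha> z)) + \<beta> (b (corner z)) = corner z"
proof -
  have "pi_a (\<alpha> (a z)) = 0" unfolding pi_a_def by (simp add: op_simps)
  then have series_a_\<alpha>a: "series_a (\<alpha> (a z)) = 0"
    unfolding series_a_def term_a_def
    by (simp add: linear_ops linear_simps(3)[OF bounded_linear_funpow] bounded_linear_ops)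
  have series_b_\<alpha>a: "series_b (\<alpha> (a z)) = series_b z"
    unfolding series_b_def term_b_def by (simp add: op_simps)
  have "\<beta> (b (series_a z)) = (\<Sum>n. \<beta> (b (term_a n z)))"
    using bounded_linear.suminf[OF bounded_linear_compose[OF bounded_linear_ops(5,2)] summable_term(1)]
    unfolding series_a_def by simp
  also have "\<dots> = series_a z" unfolding series_a_def term_a_def by (simp add: op_simps)
  finally have \<beta>b_series_a: "\<beta> (b (series_a z)) = series_a z" .
  have "\<beta> (b (series_b z)) = (\<Sum>n. \<beta> (b (term_b n z)))"
    using bounded_linear.suminf[OF bounded_linear_compose[OF bounded_linear_ops(5,2)] summable_term(2)]
    unfolding series_b_def by simp
  also have "\<dots> = 0" unfolding term_b_def pi_b_def by (simp add: op_simps)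
  finally have \<beta>b_series_b: "\<beta> (b (series_b z)) = 0" .
  show ?thesis
    unfolding corner_def by (simp add: linear_ops series_a_\<alpha>a series_b_\<alpha>a \<beta>b_series_a \<beta>b_series_b op_simps)
qed

lemma gDrazin_inverse_lower_triangular:
  "gDrazin_inverse (op_matrix a (\<lambda>_. 0) c b) (op_matrix \<alpha> (\<lambda>_. 0) corner \<beta>)"
  unfolding gDrazin_inverse_def
proof (intro conjI allI)
  show "clin_op (op_matrix \<alpha> (\<lambda>_. 0) corner \<beta>)"
    by (intro clin_op_op_matrix clin_op_zero clin_op_corner gDrazin_inverseD(1)[OF \<alpha>] gDrazin_inverseD(1)[OF \<beta>])
next
  fix z :: "'x \<times> 'y"
  have "corner (a (\<alpha> x)) + \<beta> (c (\<alpha> x) + b (corner x + \<beta> y)) = corner x + \<beta> y" for x y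
    using corner_absorbs[of x]
    by (simp add: linear_ops linear_simps[OF clin_op_bounded_linear[OF clin_op_corner]] op_simps add.assoc)
  then show "op_matrix \<alpha> (\<lambda>_. 0) corner \<beta> (op_matrix a (\<lambda>_. 0) c b (op_matrix \<alpha> (\<lambda>_. 0) corner \<beta> z))
      = op_matrix \<alpha> (\<lambda>_. 0) corner \<beta> z"
    by (simp add: op_matrix_apply op_simps)
  have "b (corner x) = corner (a x) + \<beta> (c x) - c (\<alpha> x)" for x
    using corner_intertwines[of x] by (simp add: algebra_simps)
  then show "op_matrix a (\<lambda>_. 0) c b (op_matrix \<alpha> (\<lambda>_. 0) corner \<beta> z)
      = op_matrix \<alpha> (\<lambda>_. 0) corner \<beta> (op_matrix a (\<lambda>_. 0) c b z)"
    by (simp add: op_matrix_apply linear_ops op_simps)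
next
  define k where "k x = c x - c (a (\<alpha> x)) - b (c (\<alpha> x)) - b (b (corner x))" for x
  have "bounded_linear k" unfolding k_def[abs_def] using bounded_linear_ops
    by (intro bounded_linear_sub bounded_linear_compose[OF bounded_linear_ops(3)]
        bounded_linear_compose[OF bounded_linear_ops(2)] bounded_linear_compose[OF bounded_linear_ops(1)]
        bounded_linear_compose[OF bounded_linear_ops(4)] clin_op_bounded_linear[OF clin_op_corner]) auto
  then have "quasinilpotent_op (op_matrix qnil_a (\<lambda>_. 0) k qnil_b)"
    by (intro quasinilpotent_op_lower_triangular bounded_linear_qnil quasinilpotent_qnil)
  moreover have "op_matrix qnil_a (\<lambda>_. 0) k qnil_b
      = (\<lambda>z. op_matrix a (\<lambda>_. 0) c b z - op_matrix a (\<lambda>_. 0) c b (op_matrix a (\<lambda>_. 0) c b (op_matrix \<alpha> (\<lambda>_. 0) corner \<beta> z)))"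
    unfolding qnil_a_def qnil_b_def k_def by (auto simp: fun_eq_iff op_matrix_apply linear_ops)
  ultimately show "quasinilpotent_op (\<lambda>z. op_matrix a (\<lambda>_. 0) c b z
      - op_matrix a (\<lambda>_. 0) c b (op_matrix a (\<lambda>_. 0) c b (op_matrix \<alpha> (\<lambda>_. 0) corner \<beta> z)))"
    by simp
qed

end

lemma has_gDrazin_nilpotent:
  fixes T :: "'a::complex_normed_vector \<Rightarrow> 'a"
  shows "clin_op T \<Longrightarrow> T ^^ k = (\<lambda>_. 0) \<Longrightarrow> has_gDrazin T"
  using gDrazin_inverse_nilpotent unfolding has_gDrazin_iff_gDrazin_inverse by blast

lemma has_gDrazin_square:
  fixes T :: "'a::complex_normed_vector \<Rightarrow> 'a"
  shows "clin_op T \<Longrightarrow> has_gDrazin T \<Longrightarrow> has_gDrazin (\<lambda>x. T (T x))"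
  using gDrazin_inverse_square unfolding has_gDrazin_iff_gDrazin_inverse by blast

lemma has_gDrazin_of_square:
  fixes T :: "'a::complex_normed_vector \<Rightarrow> 'a"
  shows "clin_op T \<Longrightarrow> has_gDrazin (\<lambda>x. T (T x)) \<Longrightarrow> has_gDrazin T"
  using gDrazin_inverse_of_square unfolding has_gDrazin_iff_gDrazin_inverse by blast

lemma has_gDrazin_Cline:
  fixes U :: "'b::complex_normed_vector \<Rightarrow> 'a::complex_normed_vector" and V :: "'a \<Rightarrow> 'b"
  shows "clin_op U \<Longrightarrow> clin_op V \<Longrightarrow> has_gDrazin (\<lambda>x. V (U x)) \<Longrightarrow> has_gDrazin (\<lambda>x. U (V x))"
  using gDrazin_inverse_Cline unfolding has_gDrazin_iff_gDrazin_inverse by blast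

lemma has_gDrazin_lower_triangular:
  fixes a :: "'x::complex_normed_vector \<Rightarrow> 'x" and b :: "'y::{complex_normed_vector,banach} \<Rightarrow> 'y"
    and c :: "'x \<Rightarrow> 'y"
  assumes "clin_op a" "clin_op b" "clin_op c" "has_gDrazin a" "has_gDrazin b"
  shows "has_gDrazin (op_matrix a (\<lambda>_. 0) c b)"
  using assms gDrazin_lower_triangular.gDrazin_inverse_lower_triangular[OF gDrazin_lower_triangular.intro]
  unfolding has_gDrazin_iff_gDrazin_inverse by blast

lemma has_gDrazin_add_zero_product:
  fixes a b :: "'x::{complex_normed_vector,banach} \<Rightarrow> 'x"
  assumes a: "clin_op a" and b: "clin_op b" and "has_gDrazin a" "has_gDrazin b"
    and zero: "\<And>x. a (b x) = 0"
  shows "has_gDrazin (\<lambda>x. a x + b x)"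
proof -
  define U where "U z = fst z + b (snd z)" for z :: "'x \<times> 'x"
  define V where "V x = (a x, x)" for x :: 'x
  have "(\<lambda>z. V (U z)) = op_matrix a (\<lambda>_. 0) (\<lambda>x. x) b"
    unfolding U_def V_def
    by (auto simp: fun_eq_iff op_matrix_apply linear_simps[OF clin_op_bounded_linear[OF a]] zero)
  then have "has_gDrazin (\<lambda>z. V (U z))"
    using has_gDrazin_lower_triangular[OF a b clin_op_ident] assms by simp
  moreover have "clin_op U" "clin_op V" unfolding U_def[abs_def] V_def[abs_def]
    by (intro clin_op_add clin_op_fst clin_op_compose[OF b clin_op_snd] clin_op_Pair a clin_op_ident)+
  ultimately have "has_gDrazin (\<lambda>x. U (V x))" by (metis has_gDrazin_Cline)
  then show ?thesis unfolding U_def V_def by simp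
qed

lemma has_gDrazin_upper_row:
  fixes E :: "'a::complex_normed_vector \<Rightarrow> 'a" and F :: "'b::complex_normed_vector \<Rightarrow> 'a"
  assumes E: "clin_op E" and F: "clin_op F" and "has_gDrazin E"
  shows "has_gDrazin (op_matrix E F (\<lambda>_. 0) (\<lambda>_. 0))"
proof -
  have U: "clin_op (\<lambda>x. (x, 0 :: 'b))" by (intro clin_op_Pair clin_op_ident clin_op_zero)
  have V: "clin_op (\<lambda>z. E (fst z) + F (snd z))"
    by (intro clin_op_add clin_op_compose[OF E clin_op_fst] clin_op_compose[OF F clin_op_snd])
  have "has_gDrazin (\<lambda>x. E (fst (x, 0 :: 'b)) + F (snd (x, 0 :: 'b)))"
    using assms linear_simps(3)[OF clin_op_bounded_linear[OF F]] by simp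
  then show ?thesis
    using has_gDrazin_Cline[OF U V] by (simp add: op_matrix_def case_prod_beta')
qed

lemma has_gDrazin_lower_row:
  fixes G :: "'a::complex_normed_vector \<Rightarrow> 'b::complex_normed_vector" and H :: "'b \<Rightarrow> 'b"
  assumes G: "clin_op G" and H: "clin_op H" and "has_gDrazin H"
  shows "has_gDrazin (op_matrix (\<lambda>_. 0) (\<lambda>_. 0) G H)"
proof -
  have U: "clin_op (\<lambda>y. (0 :: 'a, y))" by (intro clin_op_Pair clin_op_ident clin_op_zero)
  have V: "clin_op (\<lambda>z. G (fst z) + H (snd z))"
    by (intro clin_op_add clin_op_compose[OF G clin_op_fst] clin_op_compose[OF H clin_op_snd])
  have "has_gDrazin (\<lambda>y. G (fst (0 :: 'a, y)) + H (snd (0 :: 'a, y)))"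
    using assms linear_simps(3)[OF clin_op_bounded_linear[OF G]] by simp
  then show ?thesis
    using has_gDrazin_Cline[OF U V] by (simp add: op_matrix_def case_prod_beta')
qed

lemma has_gDrazin_square_plus_nilpotent:
  fixes B :: "'b::{complex_normed_vector,banach} \<Rightarrow> 'a::complex_normed_vector"
    and C :: "'a \<Rightarrow> 'b" and D :: "'b \<Rightarrow> 'b"
  assumes B: "clin_op B" and C: "clin_op C" and D: "clin_op D" and "has_gDrazin D"
    and DCB: "\<And>y. D (C (B y)) = 0" and BCBC: "\<And>x. B (C (B (C x))) = 0"
  shows "has_gDrazin (\<lambda>y. D (D y) + C (B y))"
proof (rule has_gDrazin_add_zero_product)
  show "clin_op (\<lambda>y. D (D y))" "clin_op (\<lambda>y. C (B y))" using B C D by (auto intro: clin_op_compose)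
  show "has_gDrazin (\<lambda>y. D (D y))" using has_gDrazin_square[OF D] assms by simp
  show "D (D (C (B y))) = 0" for y using DCB linear_simps(3)[OF clin_op_bounded_linear[OF D]] by simp
  have "(\<lambda>y. C (B y)) ^^ 3 = (\<lambda>_. 0)"
    using BCBC linear_simps(3)[OF clin_op_bounded_linear[OF C]] by (simp add: fun_eq_iff numeral_3_eq_3)
  then show "has_gDrazin (\<lambda>y. C (B y))" using \<open>clin_op (\<lambda>y. C (B y))\<close> by (intro has_gDrazin_nilpotent)
qed

theorem theorem3p3:
  fixes A :: "'a::{complex_normed_vector, banach} \<Rightarrow> 'a"
    and B :: "'b::{complex_normed_vector, banach} \<Rightarrow> 'a"
    and C :: "'a \<Rightarrow> 'b"
    and D :: "'b \<Rightarrow> 'b"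
  assumes "clin_op A" and "clin_op B" and "clin_op C" and "clin_op D"
    and "has_gDrazin A" and "has_gDrazin D"
    and "A \<circ> B \<circ> C = (\<lambda>_. 0)"
    and "A \<circ> B \<circ> D = (\<lambda>_. 0)"
    and "D \<circ> C \<circ> B = (\<lambda>_. 0)"
    and "B \<circ> C \<circ> B \<circ> C = (\<lambda>_. 0)"
    and "B \<circ> C \<circ> B \<circ> D = (\<lambda>_. 0)"
  shows "has_gDrazin (op_matrix A B C D)"
proof -
  note ops = assms(1-4) and zero = assms(7-11)[unfolded comp_def fun_eq_iff, simplified]
  note bl = ops[THEN clin_op_bounded_linear]
  note linear = linear_simps[OF bl(1)] linear_simps[OF bl(2)] linear_simps[OF bl(3)] linear_simps[OF bl(4)]
  define P where "P = op_matrix (\<lambda>x. A (A x)) (\<lambda>y. A (B y)) (\<lambda>_. 0) (\<lambda>_. 0)"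
  define Q where "Q = op_matrix (\<lambda>_. 0) (\<lambda>_. 0) (\<lambda>x. C (A x) + D (C x)) (\<lambda>y. D (D y) + C (B y))"
  define R where "R = op_matrix (\<lambda>x. B (C x)) (\<lambda>y. B (D y)) (\<lambda>_. 0) (\<lambda>_. 0)"
  have clin_op_PQR: "clin_op P" "clin_op Q" "clin_op R"
    unfolding P_def Q_def R_def
    by (intro clin_op_op_matrix clin_op_zero clin_op_add ops clin_op_compose[OF ops(1)]
        clin_op_compose[OF ops(2)] clin_op_compose[OF ops(3)] clin_op_compose[OF ops(4)])+
  have "has_gDrazin P"
    unfolding P_def using ops assms(5)
    by (intro has_gDrazin_upper_row has_gDrazin_square clin_op_compose[OF ops(1)] ops)
  have "has_gDrazin Q"
    unfolding Q_def using ops assms(6) zero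
    by (intro has_gDrazin_lower_row has_gDrazin_square_plus_nilpotent clin_op_add ops
        clin_op_compose[OF ops(3)] clin_op_compose[OF ops(4)]) auto
  have "has_gDrazin R"
    by (rule has_gDrazin_nilpotent[OF clin_op_PQR(3), of 2])
      (simp add: R_def fun_eq_iff op_matrix_apply numeral_2_eq_2 linear zero zero_prod_def)
  have "has_gDrazin (\<lambda>z. Q z + R z)"
    using clin_op_PQR(2,3) \<open>has_gDrazin Q\<close> \<open>has_gDrazin R\<close>
    by (rule has_gDrazin_add_zero_product) (simp add: Q_def R_def op_matrix_apply linear zero zero_prod_def)
  then have "has_gDrazin (\<lambda>z. P z + (Q z + R z))"
    using \<open>has_gDrazin P\<close>
    by (intro has_gDrazin_add_zero_product[OF clin_op_PQR(1) clin_op_add[OF clin_op_PQR(2,3)]])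
      (simp_all add: P_def Q_def R_def op_matrix_apply linear zero zero_prod_def)
  moreover have "(\<lambda>z. P z + (Q z + R z)) = (\<lambda>z. op_matrix A B C D (op_matrix A B C D z))"
    by (auto simp: P_def Q_def R_def fun_eq_iff op_matrix_apply linear algebra_simps)
  ultimately show ?thesis using has_gDrazin_of_square[OF clin_op_op_matrix[OF ops]] by simp
qed

end
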